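(* There is an absolute constant $c>0$ such that the following holds. Let $J\ge 1$ and let $\mathbf{b}=(b_1,\dots,b_J)$ be non-negative integers with $b_1+\cdots+b_J=J$. Then \[ \sum_{\mathbf{d}\in\mathcal{D}(\mathbf{b})} \frac{|\mathscr{L}^*(\mathbf{d})|}{d_1\cdots d_J} \ge c\,\frac{(2\log 2)^J}{\sum_{i=1}^J 2^{b_1+\cdots+b_i-i}}. \]
   Context: $\mathcal{D}(\mathbf{b}) = \prod_{i=1}^J \{2^{i-1},2^{i-1}+1,\dots,2^i-1\}^{b_i}$, i.e. the set of $J$-tuples $\mathbf{d}=(d_1,\dots,d_J)$ of positive integers whose first $b_1$ coordinates lie in $[1,1]$, next $b_2$ coordinates lie in $[2,3]$, ..., last $b_J$ coordinates lie in $[2^{J-1},2^J-1]$. For a tuple $\mathbf{a}=(a_1,\dots,a_r)$, $\mathscr{L}^*(\mathbf{a}) = \{\sum_{i\in I} a_i : I\subset\{1,\dots,r\}\}$ is its set of subset sums, and $|\cdot|$ denotes cardinality. Logarithms are natural. *)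

theory Defs
  imports "HOL-Analysis.Analysis"
begin

definition psum :: "(nat \<Rightarrow> nat) \<Rightarrow> nat \<Rightarrow> nat" where
  "psum b i = (\<Sum>j=1..i. b j)"

definition Dset :: "nat \<Rightarrow> (nat \<Rightarrow> nat) \<Rightarrow> (nat \<Rightarrow> nat) set" where
  "Dset J b = {d. (\<forall>k. k \<notin> {1..J} \<longrightarrow> d k = 0) \<and>
      (\<forall>i\<in>{1..J}. \<forall>k. psum b (i - 1) < k \<and> k \<le> psum b i \<longrightarrow>
          d k \<in> {2 ^ (i - 1) .. 2 ^ i - 1})}"

definition subset_sums :: "nat \<Rightarrow> (nat \<Rightarrow> nat) \<Rightarrow> nat set" where
  "subset_sums r a = {\<Sum>i\<in>I. a i | I. I \<subseteq> {1..r}}"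

end

theory Submission
  imports Defs
begin

(*
  Put w(d) = 1/(d_1 \<cdots> d_J) and T = \<Sum>_{d \<in> D} w(d) \<ge> (log 2)^J, and let E(d) count the
  pairs (I, I') of index sets with equal d-sums.  Cauchy--Schwarz over the fibres of
  I \<mapsto> \<Sum>_{i\<in>I} d_i gives (2^J T)^2 \<le> (\<Sum>_d w(d) |L*(d)|) (\<Sum>_d w(d) E(d)), so it suffices to
  bound \<Sum>_d w(d) E(d).  The diagonal pairs contribute 2^J T.  For I \<noteq> I' let m be the
  largest index at which they differ and i the block containing m: resampling d_m over its
  dyadic block [2^(i-1), 2^i) shows that the tuples with \<Sum>_I d = \<Sum>_I' d carry weight at
  most T / (2^(i-1) log 2), and at most 2^J 2^(m-1) pairs have this m.  Summing over m
  bounds the off-diagonal part by (2^(J+1) T / log 2) \<Sum>_i 2^(b_1+\<dots>+b_i-i).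
*)

lemma ln_diff_le_sum_inverse:
  assumes "1 \<le> a" "a \<le> c"
  shows "ln (real c) - ln (real a) \<le> (\<Sum>x\<in>{a..<c}. 1 / real x)"
  using assms(2)
proof (induction c rule: dec_induct)
  case base
  then show ?case by simp
next
  case (step n)
  have n: "real n \<ge> 1" using step assms by simp
  have "ln (real (Suc n)) - ln (real n) = ln (real (Suc n) / real n)"
    using n by (simp add: ln_div)
  also have "real (Suc n) / real n = 1 + 1 / real n"
    using n by (simp add: field_simps)
  also have "ln (1 + 1 / real n) \<le> 1 / real n" by (rule ln_add_one_self_le_self) simp
  finally show ?case using step by simp
qed

definition dyadic_block :: "nat \<Rightarrow> nat set" where
  "dyadic_block i = {2 ^ (i - 1) ..< 2 ^ i}"

lemma finite_dyadic_block [simp]: "finite (dyadic_block i)"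
  by (simp add: dyadic_block_def)

lemma dyadic_block_ge: "x \<in> dyadic_block i \<Longrightarrow> 2 ^ (i - 1) \<le> x"
  by (simp add: dyadic_block_def)

lemma dyadic_block_pos: "x \<in> dyadic_block i \<Longrightarrow> 0 < x"
  using dyadic_block_ge[of x i] by (metis le_zero_eq not_gr0 power_not_zero zero_neq_numeral)

lemma ln2_le_sum_inverse_dyadic_block:
  assumes "1 \<le> i"
  shows "ln 2 \<le> (\<Sum>x\<in>dyadic_block i. 1 / real x)"
proof -
  have "ln 2 = ln (real (2 ^ i)) - ln (real ((2::nat) ^ (i - 1)))"
    using assms by (simp add: ln_realpow of_nat_diff algebra_simps)
  also have "\<dots> \<le> (\<Sum>x\<in>dyadic_block i. 1 / real x)"
    unfolding dyadic_block_def by (rule ln_diff_le_sum_inverse) (auto intro: power_increasing)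
  finally show ?thesis .
qed

lemma sum_pow2_le: "(\<Sum>m=1..n. (2::real) ^ (m - 1)) \<le> 2 ^ n"
  by (induction n) simp_all

lemma weighted_Cauchy_Schwarz:
  fixes w x :: "'a \<Rightarrow> real"
  assumes "\<And>a. a \<in> A \<Longrightarrow> w a \<ge> 0"
  shows "(\<Sum>a\<in>A. w a * x a)\<^sup>2 \<le> (\<Sum>a\<in>A. w a) * (\<Sum>a\<in>A. w a * (x a)\<^sup>2)"
proof -
  have "(\<Sum>a\<in>A. sqrt (w a) * (sqrt (w a) * x a))\<^sup>2
     \<le> (\<Sum>a\<in>A. (sqrt (w a))\<^sup>2) * (\<Sum>a\<in>A. (sqrt (w a) * x a)\<^sup>2)"
    by (rule Cauchy_Schwarz_ineq_sum)
  moreover have "(\<Sum>a\<in>A. sqrt (w a) * (sqrt (w a) * x a)) = (\<Sum>a\<in>A. w a * x a)"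
    by (rule sum.cong) (use assms in \<open>auto simp: mult.assoc[symmetric]\<close>)
  moreover have "(\<Sum>a\<in>A. (sqrt (w a))\<^sup>2) = (\<Sum>a\<in>A. w a)"
    by (rule sum.cong) (use assms in auto)
  moreover have "(\<Sum>a\<in>A. (sqrt (w a) * x a)\<^sup>2) = (\<Sum>a\<in>A. w a * (x a)\<^sup>2)"
    by (rule sum.cong) (use assms in \<open>auto simp: power_mult_distrib\<close>)
  ultimately show ?thesis by simp
qed

lemma sum_card_fibres:
  assumes "finite A"
  shows "(\<Sum>v\<in>s ` A. card {x\<in>A. s x = v}) = card A"
  using card_eq_sum[of A] sum.image_gen[OF assms, of "\<lambda>_. 1::nat" s] by simp

lemma sum_card_fibres_squared:
  assumes "finite A"
  shows "(\<Sum>v\<in>s ` A. (card {x\<in>A. s x = v})\<^sup>2) = card {p\<in>A \<times> A. s (fst p) = s (snd p)}"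
proof -
  let ?C = "{p\<in>A \<times> A. s (fst p) = s (snd p)}"
  have image: "(\<lambda>p. s (fst p)) ` ?C = s ` A"
    by (force intro: image_eqI[where x = "(_, _)"])
  have fibre: "{p\<in>?C. s (fst p) = v} = {x\<in>A. s x = v} \<times> {x\<in>A. s x = v}" for v
    by auto
  have "card ?C = (\<Sum>v\<in>(\<lambda>p. s (fst p)) ` ?C. card {p\<in>?C. s (fst p) = v})"
    using card_eq_sum[of ?C] sum.image_gen[of ?C "\<lambda>_. 1::nat" "\<lambda>p. s (fst p)"] assms by simp
  then show ?thesis
    unfolding image fibre by (simp add: card_cartesian_product power2_eq_square)
qed

text \<open>Cauchy--Schwarz over the fibres of each \<open>s d\<close>: many collisions are needed to make
  the images small.\<close>
lemma weighted_collision_bound: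
  fixes w :: "'d \<Rightarrow> real" and A :: "'d \<Rightarrow> 'a set" and s :: "'d \<Rightarrow> 'a \<Rightarrow> 'b"
  assumes "finite D" "\<And>d. d \<in> D \<Longrightarrow> finite (A d)" "\<And>d. d \<in> D \<Longrightarrow> w d \<ge> 0"
  shows "(\<Sum>d\<in>D. w d * card (A d))\<^sup>2
    \<le> (\<Sum>d\<in>D. w d * card (s d ` A d)) * (\<Sum>d\<in>D. w d * card {p\<in>A d \<times> A d. s d (fst p) = s d (snd p)})"
proof -
  let ?n = "\<lambda>d v. real (card {x\<in>A d. s d x = v})"
  have Sigma: "(\<Sum>p\<in>(SIGMA d:D. s d ` A d). f (fst p) (snd p)) = (\<Sum>d\<in>D. \<Sum>v\<in>s d ` A d. f d v)"
    for f :: "'d \<Rightarrow> 'b \<Rightarrow> real"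
    using assms(1,2) by (subst sum.Sigma) (auto simp: split_beta)
  have "(\<Sum>p\<in>(SIGMA d:D. s d ` A d). w (fst p) * ?n (fst p) (snd p))\<^sup>2
      \<le> (\<Sum>p\<in>(SIGMA d:D. s d ` A d). w (fst p))
        * (\<Sum>p\<in>(SIGMA d:D. s d ` A d). w (fst p) * (?n (fst p) (snd p))\<^sup>2)"
    by (rule weighted_Cauchy_Schwarz) (use assms(3) in auto)
  moreover have "(\<Sum>p\<in>(SIGMA d:D. s d ` A d). w (fst p) * ?n (fst p) (snd p))
      = (\<Sum>d\<in>D. w d * card (A d))"
    unfolding Sigma[of "\<lambda>d v. w d * ?n d v"]
    by (intro sum.cong) (simp_all add: sum_card_fibres assms(2) flip: sum_distrib_left of_nat_sum)
  moreover have "(\<Sum>p\<in>(SIGMA d:D. s d ` A d). w (fst p)) = (\<Sum>d\<in>D. w d * card (s d ` A d))"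
    unfolding Sigma[of "\<lambda>d v. w d"] by (simp add: mult.commute)
  moreover have "(\<Sum>p\<in>(SIGMA d:D. s d ` A d). w (fst p) * (?n (fst p) (snd p))\<^sup>2)
      = (\<Sum>d\<in>D. w d * card {p\<in>A d \<times> A d. s d (fst p) = s d (snd p)})"
    unfolding Sigma[of "\<lambda>d v. w d * (?n d v)\<^sup>2"]
    by (intro sum.cong)
      (simp_all add: sum_card_fibres_squared assms(2) flip: sum_distrib_left of_nat_sum of_nat_power)
  ultimately show ?thesis by simp
qed

lemma finite_funs_zero_outside:
  assumes "finite A" "\<And>k. k \<in> A \<Longrightarrow> finite (X k)"
  shows "finite {d. (\<forall>k. k \<notin> A \<longrightarrow> d k = 0) \<and> (\<forall>k\<in>A. d k \<in> X k)}"
proof -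
  have "{d. (\<forall>k. k \<notin> A \<longrightarrow> d k = 0) \<and> (\<forall>k\<in>A. d k \<in> X k)}
      = (\<lambda>e k. if k \<in> A then e k else 0) ` PiE A X"
    by (auto intro!: image_eqI[where x = "restrict _ A"])
  then show ?thesis using assms by (simp add: finite_PiE)
qed

lemma sum_prod_funs_zero_outside:
  fixes g :: "'a \<Rightarrow> 'b::zero \<Rightarrow> 'c::comm_semiring_1"
  assumes "finite A" "\<And>k. k \<in> A \<Longrightarrow> finite (X k)"
  shows "(\<Sum>d\<in>{d. (\<forall>k. k \<notin> A \<longrightarrow> d k = 0) \<and> (\<forall>k\<in>A. d k \<in> X k)}. \<Prod>k\<in>A. g k (d k))
      = (\<Prod>k\<in>A. \<Sum>x\<in>X k. g k x)"
proof -
  let ?extend = "\<lambda>e k. if k \<in> A then e k else 0"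
  have "(\<Prod>k\<in>A. \<Sum>x\<in>X k. g k x) = (\<Sum>e\<in>PiE A X. \<Prod>k\<in>A. g k (e k))"
    by (rule prod_sum_PiE) (use assms in auto)
  also have "\<dots> = (\<Sum>d\<in>{d. (\<forall>k. k \<notin> A \<longrightarrow> d k = 0) \<and> (\<forall>k\<in>A. d k \<in> X k)}. \<Prod>k\<in>A. g k (d k))"
    by (rule sum.reindex_bij_witness[where i = "\<lambda>d. restrict d A" and j = ?extend])
      (auto simp: PiE_def extensional_def intro!: prod.cong)
  finally show ?thesis by simp
qed

text \<open>If \<open>m \<in> I - I'\<close>, the relation \<open>\<Sum>I d = \<Sum>I' d\<close> determines \<open>d m\<close> from the other coordinates.\<close>
lemma inj_on_fun_upd_equal_sums:
  fixes I I' :: "'a set"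
  assumes "finite I" "m \<in> I" "m \<notin> I'"
  shows "inj_on (\<lambda>(d, x). d(m := x))
    ({d :: 'a \<Rightarrow> 'b::cancel_comm_monoid_add. (\<Sum>k\<in>I. d k) = (\<Sum>k\<in>I'. d k)} \<times> UNIV)"
proof (rule inj_onI, clarsimp)
  fix d d' :: "'a \<Rightarrow> 'b" and x x'
  assume d: "(\<Sum>k\<in>I. d k) = (\<Sum>k\<in>I'. d k)" and d': "(\<Sum>k\<in>I. d' k) = (\<Sum>k\<in>I'. d' k)"
    and eq: "d(m := x) = d'(m := x')"
  have off: "d k = d' k" if "k \<noteq> m" for k
    using fun_cong[OF eq, of k] that by simp
  have "d m + (\<Sum>k\<in>I - {m}. d k) = d' m + (\<Sum>k\<in>I - {m}. d k)"
  proof -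
    have "d m + (\<Sum>k\<in>I - {m}. d k) = (\<Sum>k\<in>I'. d k)"
      using d by (simp add: sum.remove[OF assms(1,2)])
    also have "\<dots> = (\<Sum>k\<in>I'. d' k)"
      by (intro sum.cong refl off) (use assms(3) in blast)
    also have "\<dots> = d' m + (\<Sum>k\<in>I - {m}. d' k)"
      using d' by (simp add: sum.remove[OF assms(1,2)])
    also have "(\<Sum>k\<in>I - {m}. d' k) = (\<Sum>k\<in>I - {m}. d k)"
      by (intro sum.cong refl off[symmetric]) blast
    finally show ?thesis .
  qed
  then have "d m = d' m" by simp
  with off have "d = d'" by (metis ext)
  then show "d = d' \<and> x = x'"
    using fun_cong[OF eq, of m] by simp
qed

definition max_sym_diff :: "nat set \<times> nat set \<Rightarrow> nat" where
  "max_sym_diff p = Max (sym_diff (fst p) (snd p))"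

lemma max_sym_diff_in:
  assumes "finite I" "finite I'" "I \<noteq> I'"
  shows "max_sym_diff (I, I') \<in> sym_diff I I'"
  unfolding max_sym_diff_def fst_conv snd_conv using assms by (intro Max_in) auto

lemma max_sym_diff_ge:
  assumes "finite I" "finite I'" "k \<in> sym_diff I I'"
  shows "k \<le> max_sym_diff (I, I')"
  unfolding max_sym_diff_def fst_conv snd_conv using assms by (intro Max_ge) auto

lemma max_sym_diff_mem:
  assumes "finite A" "p \<in> Pow A \<times> Pow A" "fst p \<noteq> snd p"
  shows "max_sym_diff p \<in> A"
proof -
  obtain I I' where p: "p = (I, I')" by fastforce
  have "I \<subseteq> A" "I' \<subseteq> A" using assms(2) unfolding p by auto
  then have "finite I" "finite I'" using assms(1) by (auto dest: finite_subset)
  then show ?thesis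
    using max_sym_diff_in[of I I'] assms(3) \<open>I \<subseteq> A\<close> \<open>I' \<subseteq> A\<close> unfolding p by auto
qed

lemma eq_if_max_sym_diff_eq:
  assumes fin: "finite I" "finite I'" "finite K'"
    and ne: "I \<noteq> I'" "I \<noteq> K'"
    and m: "max_sym_diff (I, I') = m" "max_sym_diff (I, K') = m"
    and below: "I' \<inter> {..<m} = K' \<inter> {..<m}"
  shows "I' = K'"
proof (rule set_eqI)
  fix k
  consider "k < m" | "k = m" | "m < k" by linarith
  then show "k \<in> I' \<longleftrightarrow> k \<in> K'"
  proof cases
    case 1
    then show ?thesis using below by blast
  next
    case 2
    have "m \<in> sym_diff I I'" "m \<in> sym_diff I K'"
      using max_sym_diff_in[of I I'] max_sym_diff_in[of I K'] fin ne m by auto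
    with 2 show ?thesis by blast
  next
    case 3
    then show ?thesis
      using max_sym_diff_ge[of I I' k] max_sym_diff_ge[of I K' k] fin m by auto
  qed
qed

lemma card_pairs_max_sym_diff_le:
  "card {p \<in> Pow {1..n} \<times> Pow {1..n}. fst p \<noteq> snd p \<and> max_sym_diff p = m} \<le> 2 ^ n * 2 ^ (m - 1)"
proof -
  let ?Q = "{p \<in> Pow {1..n} \<times> Pow {1..n}. fst p \<noteq> snd p \<and> max_sym_diff p = m}"
  let ?g = "\<lambda>p. (fst p, snd p \<inter> {..<m})"
  have "inj_on ?g ?Q"
  proof (rule inj_onI)
    fix p q
    assume Q: "p \<in> ?Q" "q \<in> ?Q" and g: "?g p = ?g q"
    obtain I I' K K' where pq: "p = (I, I')" "q = (K, K')" by fastforce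
    have "I \<subseteq> {1..n}" "I' \<subseteq> {1..n}" "K' \<subseteq> {1..n}"
      using Q unfolding pq by auto
    then have "finite I" "finite I'" "finite K'"
      by (meson finite_atLeastAtMost finite_subset)+
    then show "p = q"
      using Q g eq_if_max_sym_diff_eq[of I I' K' m] unfolding pq by auto
  qed
  then have "card ?Q = card (?g ` ?Q)" by (simp add: card_image)
  also have "\<dots> \<le> card (Pow {1..n} \<times> Pow {1..<m})"
    by (rule card_mono) auto
  also have "\<dots> = 2 ^ n * 2 ^ (m - 1)"
    by (simp add: card_cartesian_product card_Pow)
  finally show ?thesis .
qed

lemma sum_weighted_card_swap:
  fixes w :: "'d \<Rightarrow> real"
  assumes "finite D" "finite Q"
  shows "(\<Sum>d\<in>D. w d * card {p\<in>Q. P d p}) = (\<Sum>p\<in>Q. \<Sum>d\<in>{d\<in>D. P d p}. w d)"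
proof -
  have "(\<Sum>d\<in>D. w d * card {p\<in>Q. P d p}) = (\<Sum>d\<in>D. \<Sum>p\<in>Q. if P d p then w d else 0)"
    using assms(2) by (simp add: sum.If_cases Int_def conj_commute mult.commute)
  also have "\<dots> = (\<Sum>p\<in>Q. \<Sum>d\<in>D. if P d p then w d else 0)"
    by (rule sum.swap)
  also have "\<dots> = (\<Sum>p\<in>Q. \<Sum>d\<in>{d\<in>D. P d p}. w d)"
    using assms(1) by (simp add: sum.inter_filter)
  finally show ?thesis .
qed

lemma subset_sums_eq_image: "subset_sums r a = (\<lambda>I. \<Sum>i\<in>I. a i) ` Pow {1..r}"
  unfolding subset_sums_def by auto

lemma psum_mono: "i \<le> j \<Longrightarrow> psum b i \<le> psum b j"
  unfolding psum_def by (rule sum_mono2) auto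

lemma psum_0 [simp]: "psum b 0 = 0"
  unfolding psum_def by simp

definition block_index :: "(nat \<Rightarrow> nat) \<Rightarrow> nat \<Rightarrow> nat" where
  "block_index b k = (LEAST i. k \<le> psum b i)"

lemma block_index_eq:
  assumes "psum b (i - 1) < k" "k \<le> psum b i"
  shows "block_index b k = i"
proof -
  have le: "block_index b k \<le> i"
    unfolding block_index_def using assms(2) by (rule Least_le)
  have "k \<le> psum b (block_index b k)"
    unfolding block_index_def using assms(2) by (rule LeastI)
  moreover have "psum b (block_index b k) \<le> psum b (i - 1)" if "block_index b k < i"
    using that by (intro psum_mono) simp
  ultimately show ?thesis using le assms(1) by fastforce
qed

locale dyadic_tuples =
  fixes J :: nat and b :: "nat \<Rightarrow> nat"
  assumes sum_b: "(\<Sum>i=1..J. b i) = J"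
begin

abbreviation D :: "(nat \<Rightarrow> nat) set" where
  "D \<equiv> Dset J b"

abbreviation block :: "nat \<Rightarrow> nat" where
  "block \<equiv> block_index b"

lemma psum_J: "psum b J = J"
  using sum_b by (simp add: psum_def)

lemma block_bounds:
  assumes "k \<in> {1..J}"
  shows "block k \<in> {1..J}" "psum b (block k - 1) < k" "k \<le> psum b (block k)"
proof -
  have J: "k \<le> psum b J" using assms psum_J by simp
  show upper: "k \<le> psum b (block k)"
    unfolding block_index_def using J by (rule LeastI)
  have "block k \<le> J"
    unfolding block_index_def using J by (rule Least_le)
  moreover have "block k \<noteq> 0"
  proof
    assume "block k = 0"
    with upper assms show False by simp
  qed
  ultimately show "block k \<in> {1..J}" by simp
  show "psum b (block k - 1) < k"
  proof (rule ccontr)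
    assume "\<not> psum b (block k - 1) < k"
    then have "block k \<le> block k - 1"
      unfolding block_index_def by (intro Least_le) simp
    with \<open>block k \<noteq> 0\<close> show False by simp
  qed
qed

lemma Dset_eq:
  "D = {d. (\<forall>k. k \<notin> {1..J} \<longrightarrow> d k = 0) \<and> (\<forall>k\<in>{1..J}. d k \<in> dyadic_block (block k))}"
proof -
  have dyadic: "{2 ^ (i - 1) .. 2 ^ i - 1} = dyadic_block i" for i
  proof -
    have "Suc (2 ^ i - 1) = (2::nat) ^ i" by simp
    then show ?thesis
      unfolding dyadic_block_def using atLeastLessThanSuc_atLeastAtMost[of "2 ^ (i - 1)" "2 ^ i - 1"]
      by simp
  qed
  have "(\<forall>i\<in>{1..J}. \<forall>k. psum b (i - 1) < k \<and> k \<le> psum b i \<longrightarrow> d k \<in> dyadic_block i)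
      \<longleftrightarrow> (\<forall>k\<in>{1..J}. d k \<in> dyadic_block (block k))" for d :: "nat \<Rightarrow> nat"
  proof
    assume "\<forall>i\<in>{1..J}. \<forall>k. psum b (i - 1) < k \<and> k \<le> psum b i \<longrightarrow> d k \<in> dyadic_block i"
    then show "\<forall>k\<in>{1..J}. d k \<in> dyadic_block (block k)"
      using block_bounds by blast
  next
    assume block_coord: "\<forall>k\<in>{1..J}. d k \<in> dyadic_block (block k)"
    show "\<forall>i\<in>{1..J}. \<forall>k. psum b (i - 1) < k \<and> k \<le> psum b i \<longrightarrow> d k \<in> dyadic_block i"
    proof (intro ballI allI impI)
      fix i k
      assume "i \<in> {1..J}" "psum b (i - 1) < k \<and> k \<le> psum b i"
      moreover from this have "k \<in> {1..J}"
        using psum_mono[of i J b] psum_J by auto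
      ultimately show "d k \<in> dyadic_block i"
        using block_coord block_index_eq[of b i k] by auto
    qed
  qed
  then show ?thesis
    unfolding Dset_def dyadic by simp
qed

lemma finite_Dset: "finite D"
  unfolding Dset_eq by (rule finite_funs_zero_outside) auto

lemma Dset_coord: "d \<in> D \<Longrightarrow> k \<in> {1..J} \<Longrightarrow> d k \<in> dyadic_block (block k)"
  unfolding Dset_eq by auto

lemma Dset_coord_pos: "d \<in> D \<Longrightarrow> k \<in> {1..J} \<Longrightarrow> 0 < d k"
  using Dset_coord dyadic_block_pos by blast

lemma fun_upd_in_Dset: "d \<in> D \<Longrightarrow> m \<in> {1..J} \<Longrightarrow> x \<in> dyadic_block (block m) \<Longrightarrow> d(m := x) \<in> D"
  unfolding Dset_eq by auto

definition weight :: "(nat \<Rightarrow> nat) \<Rightarrow> real" where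
  "weight d = 1 / (\<Prod>k=1..J. real (d k))"

definition total_weight :: real where
  "total_weight = (\<Sum>d\<in>D. weight d)"

lemma weight_pos: "d \<in> D \<Longrightarrow> 0 < weight d"
  unfolding weight_def using Dset_coord_pos by (auto intro!: prod_pos)

lemma weight_fun_upd:
  assumes "d \<in> D" "m \<in> {1..J}" "x \<in> dyadic_block (block m)"
  shows "weight (d(m := x)) = weight d * real (d m) / real x"
proof -
  let ?R = "\<Prod>k\<in>{1..J} - {m}. real (d k)"
  have "(\<Prod>k=1..J. real ((d(m := x)) k)) = real x * ?R"
    using assms(2) by (subst prod.remove[of _ m]) (auto intro!: prod.cong)
  moreover have "(\<Prod>k=1..J. real (d k)) = real (d m) * ?R"
    using assms(2) by (subst prod.remove[of _ m]) auto
  moreover have "?R > 0" "real (d m) > 0" "real x > 0"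
    using assms Dset_coord_pos dyadic_block_pos by (auto intro!: prod_pos)
  ultimately show ?thesis
    unfolding weight_def by (simp add: field_simps)
qed

lemma total_weight_ge: "ln 2 ^ J \<le> total_weight"
proof -
  have "ln 2 ^ J = (\<Prod>k=1..J. ln (2::real))" by simp
  also have "\<dots> \<le> (\<Prod>k=1..J. \<Sum>x\<in>dyadic_block (block k). 1 / real x)"
  proof (rule prod_mono)
    fix k
    assume "k \<in> {1..J}"
    then have "1 \<le> block k" using block_bounds(1) by simp
    then show "0 \<le> ln (2::real) \<and> ln 2 \<le> (\<Sum>x\<in>dyadic_block (block k). 1 / real x)"
      using ln2_le_sum_inverse_dyadic_block by simp
  qed
  also have "\<dots> = total_weight"
    unfolding total_weight_def weight_def Dset_eq
    by (subst sum_prod_funs_zero_outside[symmetric]) (auto simp: prod_dividef)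
  finally show ?thesis .
qed

lemma total_weight_pos: "0 < total_weight"
  using total_weight_ge by (smt (verit) ln_gt_zero_iff zero_less_power)

definition coincidence_weight :: "nat set \<times> nat set \<Rightarrow> real" where
  "coincidence_weight p = (\<Sum>d\<in>{d\<in>D. (\<Sum>k\<in>fst p. d k) = (\<Sum>k\<in>snd p. d k)}. weight d)"

lemma coincidence_weight_diag: "coincidence_weight (I, I) = total_weight"
  unfolding coincidence_weight_def total_weight_def by simp

lemma coincidence_weight_swap: "coincidence_weight (I', I) = coincidence_weight (I, I')"
  unfolding coincidence_weight_def by (metis fst_conv snd_conv)

text \<open>Resampling the coordinate \<open>d m\<close> over its whole dyadic block maps the tuples with
  \<open>\<Sum>I d = \<Sum>I' d\<close> injectively into \<open>D\<close>, and multiplies their weight by at least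
  \<open>2 ^ (block m - 1) * ln 2\<close>.\<close>
lemma coincidence_weight_mult_le:
  assumes I: "I \<subseteq> {1..J}" and m: "m \<in> I" "m \<notin> I'"
  shows "coincidence_weight (I, I') * (2 ^ (block m - 1) * ln 2) \<le> total_weight"
proof -
  let ?C = "{d\<in>D. (\<Sum>k\<in>I. d k) = (\<Sum>k\<in>I'. d k)}"
  let ?X = "dyadic_block (block m)"
  let ?upd = "\<lambda>(d, x). d(m := x)"
  have m_range: "m \<in> {1..J}" using I m by auto
  have "inj_on ?upd (?C \<times> ?X)"
    by (rule inj_on_subset[OF inj_on_fun_upd_equal_sums[OF finite_subset[OF I] m]]) auto
  then have "(\<Sum>p\<in>?C \<times> ?X. weight (?upd p)) = (\<Sum>q\<in>?upd ` (?C \<times> ?X). weight q)"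
    by (simp add: sum.reindex)
  also have "\<dots> \<le> total_weight"
    unfolding total_weight_def using fun_upd_in_Dset m_range
    by (intro sum_mono2 finite_Dset) (auto intro: less_imp_le weight_pos)
  finally have "(\<Sum>p\<in>?C \<times> ?X. weight (?upd p)) \<le> total_weight" .
  moreover have "(\<Sum>p\<in>?C \<times> ?X. weight (?upd p)) = (\<Sum>d\<in>?C. weight d * d m * (\<Sum>x\<in>?X. 1 / real x))"
  proof -
    have "(\<Sum>p\<in>?C \<times> ?X. weight (?upd p)) = (\<Sum>d\<in>?C. \<Sum>x\<in>?X. weight (d(m := x)))"
      by (simp add: sum.cartesian_product case_prod_unfold)
    also have "\<dots> = (\<Sum>d\<in>?C. weight d * d m * (\<Sum>x\<in>?X. 1 / real x))"
      by (auto simp: weight_fun_upd[OF _ m_range] sum_distrib_left intro!: sum.cong)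
    finally show ?thesis .
  qed
  moreover have "weight d * (2 ^ (block m - 1) * ln 2) \<le> weight d * d m * (\<Sum>x\<in>?X. 1 / real x)"
    if "d \<in> ?C" for d
  proof -
    have "(2::real) ^ (block m - 1) \<le> d m"
      using dyadic_block_ge[OF Dset_coord[OF _ m_range], of d] that
      by (metis (mono_tags, lifting) mem_Collect_eq numeral_power_le_of_nat_cancel_iff)
    moreover have "ln 2 \<le> (\<Sum>x\<in>?X. 1 / real x)"
      using block_bounds(1)[OF m_range] by (intro ln2_le_sum_inverse_dyadic_block) auto
    ultimately show ?thesis
      using weight_pos[of d] that by (simp add: mult.assoc mult_left_mono mult_mono)
  qed
  ultimately show ?thesis
    unfolding coincidence_weight_def fst_conv snd_conv sum_distrib_right
    by (smt (verit) sum_mono)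
qed

lemma coincidence_weight_le:
  assumes "p \<in> Pow {1..J} \<times> Pow {1..J}" "fst p \<noteq> snd p"
  shows "coincidence_weight p \<le> total_weight / (2 ^ (block (max_sym_diff p) - 1) * ln 2)"
proof -
  obtain I I' where p: "p = (I, I')" by fastforce
  have "finite I" "finite I'" "I \<subseteq> {1..J}" "I' \<subseteq> {1..J}"
    using assms unfolding p by (auto intro: finite_subset)
  then have "coincidence_weight p * (2 ^ (block (max_sym_diff p) - 1) * ln 2) \<le> total_weight"
    using max_sym_diff_in[of I I'] assms coincidence_weight_mult_le[of I "max_sym_diff p" I']
      coincidence_weight_mult_le[of I' "max_sym_diff p" I]
    unfolding p by (auto simp: coincidence_weight_swap)
  then show ?thesis by (simp add: pos_le_divide_eq)
qed

definition growth_sum :: real where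
  "growth_sum = (\<Sum>i=1..J. 2 ^ psum b i / 2 ^ i)"

lemma growth_sum_ge_1:
  assumes "1 \<le> J"
  shows "1 \<le> growth_sum"
proof -
  have "(2::real) ^ psum b J / 2 ^ J \<le> growth_sum"
    unfolding growth_sum_def by (rule member_le_sum) (use assms in auto)
  then show ?thesis by (simp add: psum_J)
qed

lemma sum_block_ratio_le:
  "(\<Sum>m=1..J. (2::real) ^ (m - 1) / 2 ^ (block m - 1)) \<le> 2 * growth_sum"
proof -
  have "(\<Sum>m=1..J. (2::real) ^ (m - 1) / 2 ^ (block m - 1))
      = (\<Sum>i\<in>block ` {1..J}. \<Sum>m\<in>{m\<in>{1..J}. block m = i}. (2::real) ^ (m - 1) / 2 ^ (block m - 1))"
    by (rule sum.image_gen) simp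
  also have "\<dots> = (\<Sum>i\<in>block ` {1..J}. \<Sum>m\<in>{m\<in>{1..J}. block m = i}. (2::real) ^ (m - 1) / 2 ^ (i - 1))"
    by (intro sum.cong) auto
  also have "\<dots> \<le> (\<Sum>i\<in>block ` {1..J}. 2 * (2 ^ psum b i / 2 ^ i))"
  proof (rule sum_mono)
    fix i
    assume "i \<in> block ` {1..J}"
    then have "1 \<le> i" using block_bounds(1) by auto
    have "(\<Sum>m\<in>{m\<in>{1..J}. block m = i}. (2::real) ^ (m - 1)) \<le> (\<Sum>m=1..psum b i. 2 ^ (m - 1))"
      using block_bounds(3) by (intro sum_mono2) auto
    also have "\<dots> \<le> 2 ^ psum b i"
      by (rule sum_pow2_le)
    finally have "(\<Sum>m\<in>{m\<in>{1..J}. block m = i}. (2::real) ^ (m - 1)) / 2 ^ (i - 1) \<le> 2 ^ psum b i / 2 ^ (i - 1)"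
      by (simp add: divide_right_mono)
    also have "(2::real) ^ psum b i / 2 ^ (i - 1) = 2 * (2 ^ psum b i / 2 ^ i)"
      using \<open>1 \<le> i\<close> by (cases i) auto
    finally show "(\<Sum>m\<in>{m\<in>{1..J}. block m = i}. (2::real) ^ (m - 1) / 2 ^ (i - 1)) \<le> 2 * (2 ^ psum b i / 2 ^ i)"
      by (simp add: sum_divide_distrib)
  qed
  also have "\<dots> \<le> (\<Sum>i=1..J. 2 * (2 ^ psum b i / 2 ^ i))"
    using block_bounds(1) by (intro sum_mono2) auto
  also have "\<dots> = 2 * growth_sum"
    unfolding growth_sum_def by (simp add: sum_distrib_left)
  finally show ?thesis .
qed

lemma sum_offdiag_coincidence_weight_le:
  "(\<Sum>p\<in>{p\<in>Pow {1..J} \<times> Pow {1..J}. fst p \<noteq> snd p}. coincidence_weight p)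
    \<le> 2 ^ J * total_weight * (2 * growth_sum / ln 2)"
proof -
  let ?Q = "{p\<in>Pow {1..J} \<times> Pow {1..J}. fst p \<noteq> snd p}"
  let ?f = "\<lambda>m. total_weight / (2 ^ (block m - 1) * ln 2)"
  have range: "max_sym_diff ` ?Q \<subseteq> {1..J}"
    by (rule image_subsetI, rule max_sym_diff_mem) auto
  have "(\<Sum>p\<in>?Q. coincidence_weight p) \<le> (\<Sum>p\<in>?Q. ?f (max_sym_diff p))"
  proof (rule sum_mono)
    fix p
    assume "p \<in> ?Q"
    then have "p \<in> Pow {1..J} \<times> Pow {1..J}" "fst p \<noteq> snd p"
      by simp_all
    then show "coincidence_weight p \<le> ?f (max_sym_diff p)"
      by (rule coincidence_weight_le)
  qed
  also have "\<dots> = (\<Sum>m=1..J. \<Sum>p\<in>{p\<in>?Q. max_sym_diff p = m}. ?f (max_sym_diff p))"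
    using range by (intro sum.group[symmetric]) auto
  also have "\<dots> = (\<Sum>m=1..J. card {p\<in>?Q. max_sym_diff p = m} * ?f m)"
    by simp
  also have "\<dots> \<le> (\<Sum>m=1..J. 2 ^ J * 2 ^ (m - 1) * ?f m)"
  proof (rule sum_mono)
    fix m
    let ?R = "{p\<in>Pow {1..J} \<times> Pow {1..J}. fst p \<noteq> snd p \<and> max_sym_diff p = m}"
    have "finite ?R"
      by (rule finite_subset[of _ "Pow {1..J} \<times> Pow {1..J}"]) (blast, simp)
    moreover have "{p\<in>?Q. max_sym_diff p = m} \<subseteq> ?R"
      by blast
    ultimately have "card {p\<in>?Q. max_sym_diff p = m} \<le> card ?R"
      by (rule card_mono)
    also have "\<dots> \<le> 2 ^ J * 2 ^ (m - 1)"
      by (rule card_pairs_max_sym_diff_le)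
    finally have "card {p\<in>?Q. max_sym_diff p = m} \<le> (2::nat) ^ J * 2 ^ (m - 1)" .
    then have "real (card {p\<in>?Q. max_sym_diff p = m}) \<le> real ((2::nat) ^ J * 2 ^ (m - 1))"
      by (rule of_nat_mono)
    then show "card {p\<in>?Q. max_sym_diff p = m} * ?f m \<le> 2 ^ J * 2 ^ (m - 1) * ?f m"
      using total_weight_pos by (intro mult_right_mono) auto
  qed
  also have "\<dots> = 2 ^ J * total_weight / ln 2 * (\<Sum>m=1..J. (2::real) ^ (m - 1) / 2 ^ (block m - 1))"
    unfolding sum_distrib_left by (intro sum.cong refl) (simp add: field_simps)
  also have "\<dots> \<le> 2 ^ J * total_weight / ln 2 * (2 * growth_sum)"
    using total_weight_pos by (intro mult_left_mono sum_block_ratio_le) auto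
  finally show ?thesis
    by simp
qed

lemma sum_coincidence_weight_le:
  "(\<Sum>p\<in>Pow {1..J} \<times> Pow {1..J}. coincidence_weight p)
    \<le> 2 ^ J * total_weight * (1 + 2 * growth_sum / ln 2)"
proof -
  let ?P = "Pow {1..J}"
  let ?O = "{p\<in>?P \<times> ?P. fst p \<noteq> snd p}"
  have diag: "?P \<times> ?P \<inter> {p. fst p = snd p} = (\<lambda>I. (I, I)) ` ?P"
    by auto
  have offdiag: "?P \<times> ?P - {p. fst p = snd p} = ?O"
    by auto
  have "(\<Sum>p\<in>?P \<times> ?P. coincidence_weight p)
      = (\<Sum>p\<in>(\<lambda>I. (I, I)) ` ?P. coincidence_weight p) + (\<Sum>p\<in>?O. coincidence_weight p)"
    unfolding diag[symmetric] offdiag[symmetric] by (rule sum.Int_Diff) simp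
  also have "(\<Sum>p\<in>(\<lambda>I. (I, I)) ` ?P. coincidence_weight p) = 2 ^ J * total_weight"
    by (simp add: sum.reindex inj_on_def coincidence_weight_diag card_Pow)
  also have "(\<Sum>p\<in>?O. coincidence_weight p) \<le> 2 ^ J * total_weight * (2 * growth_sum / ln 2)"
    by (rule sum_offdiag_coincidence_weight_le)
  finally show ?thesis
    by (simp add: distrib_left)
qed

lemma Cauchy_Schwarz_subset_sums:
  "(2 ^ J * total_weight)\<^sup>2
    \<le> (\<Sum>d\<in>D. weight d * card (subset_sums J d)) * (\<Sum>p\<in>Pow {1..J} \<times> Pow {1..J}. coincidence_weight p)"
proof -
  let ?s = "\<lambda>d I. \<Sum>k\<in>I. d k"
  have "(\<Sum>d\<in>D. weight d * card (Pow {1..J}))\<^sup>2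
      \<le> (\<Sum>d\<in>D. weight d * card (?s d ` Pow {1..J}))
        * (\<Sum>d\<in>D. weight d * card {p\<in>Pow {1..J} \<times> Pow {1..J}. ?s d (fst p) = ?s d (snd p)})"
    using finite_Dset weight_pos by (intro weighted_collision_bound) (auto intro: less_imp_le)
  moreover have "(\<Sum>d\<in>D. weight d * card (Pow {1..J})) = 2 ^ J * total_weight"
    unfolding total_weight_def by (simp add: card_Pow sum_distrib_left mult.commute)
  moreover have "(\<Sum>d\<in>D. weight d * card {p\<in>Pow {1..J} \<times> Pow {1..J}. ?s d (fst p) = ?s d (snd p)})
      = (\<Sum>p\<in>Pow {1..J} \<times> Pow {1..J}. coincidence_weight p)"
    unfolding coincidence_weight_def using finite_Dset by (subst sum_weighted_card_swap) auto
  ultimately show ?thesis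
    by (simp add: subset_sums_eq_image)
qed

lemma weighted_card_subset_sums_ge:
  assumes "1 \<le> J"
  shows "2 ^ J * ln 2 ^ J / (growth_sum * (1 + 2 / ln 2))
    \<le> (\<Sum>d\<in>D. real (card (subset_sums J d)) / (\<Prod>k=1..J. real (d k)))"
proof -
  let ?L = "\<Sum>d\<in>D. weight d * card (subset_sums J d)"
  let ?K = "1 + 2 * growth_sum / ln 2"
  have L_eq: "(\<Sum>d\<in>D. real (card (subset_sums J d)) / (\<Prod>k=1..J. real (d k))) = ?L"
    unfolding weight_def by simp
  have "?L \<ge> 0"
    by (intro sum_nonneg mult_nonneg_nonneg) (auto dest: weight_pos)
  have S: "1 \<le> growth_sum" using growth_sum_ge_1[OF assms] .
  have NT: "0 < 2 ^ J * total_weight" using total_weight_pos by simp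
  have K: "0 < ?K" "?K \<le> growth_sum * (1 + 2 / ln 2)"
    using S by (auto simp: field_simps intro: add_pos_nonneg)
  have "(2 ^ J * total_weight)\<^sup>2 \<le> ?L * (2 ^ J * total_weight * ?K)"
    using Cauchy_Schwarz_subset_sums sum_coincidence_weight_le \<open>?L \<ge> 0\<close>
    by (meson mult_left_mono order_trans)
  then have "(2 ^ J * total_weight) * (2 ^ J * total_weight) \<le> (2 ^ J * total_weight) * (?L * ?K)"
    by (simp add: power2_eq_square mult.commute mult.left_commute)
  then have "2 ^ J * total_weight \<le> ?L * ?K"
    using NT by (rule mult_left_le_imp_le)
  then have "2 ^ J * total_weight / ?K \<le> ?L"
    using K by (simp add: pos_divide_le_eq)
  moreover have "2 ^ J * ln 2 ^ J / (growth_sum * (1 + 2 / ln 2)) \<le> 2 ^ J * total_weight / ?K"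
    using K total_weight_ge S NT by (intro frac_le) auto
  ultimately show ?thesis
    unfolding L_eq by linarith
qed

end

theorem lemma4p1:
  "\<exists>c::real. c > 0 \<and>
     (\<forall>J::nat. \<forall>b::nat \<Rightarrow> nat. J \<ge> 1 \<longrightarrow> (\<Sum>i=1..J. b i) = J \<longrightarrow>
        (\<Sum>d\<in>Dset J b. real (card (subset_sums J d)) / (\<Prod>k=1..J. real (d k)))
          \<ge> c * (2 * ln 2) ^ J / (\<Sum>i=1..J. 2 powr (real (psum b i) - real i)))"
proof (intro exI conjI allI impI)
  show "1 / (1 + 2 / ln 2) > (0::real)"
    by (simp add: add_pos_pos)
  fix J :: nat and b :: "nat \<Rightarrow> nat"
  assume "J \<ge> 1" "(\<Sum>i=1..J. b i) = J"
  then interpret dyadic_tuples J b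
    by unfold_locales
  have "(\<Sum>i=1..J. 2 powr (real (psum b i) - real i)) = growth_sum"
    unfolding growth_sum_def by (simp add: powr_diff powr_realpow)
  then have "1 / (1 + 2 / ln 2) * (2 * ln 2) ^ J / (\<Sum>i=1..J. 2 powr (real (psum b i) - real i))
      = 2 ^ J * ln 2 ^ J / (growth_sum * (1 + 2 / ln 2))"
    by (simp add: power_mult_distrib)
  with weighted_card_subset_sums_ge[OF \<open>J \<ge> 1\<close>] show
    "1 / (1 + 2 / ln 2) * (2 * ln 2) ^ J / (\<Sum>i=1..J. 2 powr (real (psum b i) - real i))
      \<le> (\<Sum>d\<in>Dset J b. real (card (subset_sums J d)) / (\<Prod>k=1..J. real (d k)))"
    by linarith
qed

end
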